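(* Let $\phi$ be a Minkowski coordinate system, and suppose that $\phi'$ is an inertial coordinate system which is at rest with respect to $\phi$ and for which the isotropy of the two-way velocity of light holds. If every causality M-statement which holds true according to $\phi$ also holds true according to $\phi'$, then $\phi'$ is a Minkowski coordinate system up to a scale factor, and the $\phi$-synchrony and the $\phi'$-synchrony coincide.
   Context: Setting: Minkowski space-time modelled on $\mathbb{R}^4$ with the Lorentzian form $g$ represented in the canonical basis by $\mathrm{diag}(1,1,1,-c^2)$, $c$ the speed of light in empty space, with its standard time orientation. A Minkowski coordinate system is an affine coordinate system in which the metric takes this standard form $\mathrm{diag}(1,1,1,-c^2)$ (with the time coordinate future-oriented). An inertial coordinate system is an affine coordinate system on $\mathbb{R}^4$ whose associated basis of free vectors is of the form $(e_1,e_2,e_3,u)$, where the subspace spanned by $e_1,e_2,e_3$ is spacelike and $u$ is timelike. For an inertial coordinate system $\phi$ and events $p\neq q$, $p$ is causally M-connectible to $q$ according to $\phi$ if $\phi(q)-\phi(p)$ is a future timelike or null vector with respect to the standard Minkowski form $\mathrm{diag}(1,1,1,-c^2)$ on coordinate space; a causality M-statement is any statement that one event is causally M-connectible to another. Known fact used: for every inertial coordinate system $\phi'$ for which the two-way velocity of light is isotropic there is a unique Minkowski coordinate system $\phi$ such that the transition from $\phi$ to $\phi'$ has the form $\mathbf{r}'=\lambda\mathbf{r}$, $t'=\lambda(t+\mathbf{k}\cdot\mathbf{r})$ with $\lambda>0$, $|\mathbf{k}|<1/c$, and conversely every such $\phi'$ has isotropic two-way light speed. The $\phi$-synchrony is the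 simultaneity relation given by equal $\phi$-time coordinate. *)

theory Defs
  imports "HOL-Analysis.Analysis"
begin

text \<open>Events of Minkowski space-time and coordinate tuples are both modelled as
  elements of real^4; the fourth component is the time component.\<close>

definition mink :: "real \<Rightarrow> real^4 \<Rightarrow> real^4 \<Rightarrow> real" where
  "mink c v w = v$1 * w$1 + v$2 * w$2 + v$3 * w$3 - c\<^sup>2 * (v$4 * w$4)"

definition affine_coord :: "(real^4 \<Rightarrow> real^4) \<Rightarrow> bool" where
  "affine_coord \<phi> \<longleftrightarrow> (\<exists>L b. linear L \<and> bij L \<and> (\<forall>p. \<phi> p = L p + b))"

text \<open>The associated basis of free vectors: the i-th basis vector is the displacement
  of events corresponding to a unit step in the i-th coordinate.\<close>
definition fvec :: "(real^4 \<Rightarrow> real^4) \<Rightarrow> 4 \<Rightarrow> real^4" where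
  "fvec \<phi> i = inv \<phi> (\<phi> 0 + axis i 1) - inv \<phi> (\<phi> 0)"

definition minkowski_cs :: "real \<Rightarrow> (real^4 \<Rightarrow> real^4) \<Rightarrow> bool" where
  "minkowski_cs c \<phi> \<longleftrightarrow> affine_coord \<phi> \<and>
     (\<forall>i j. mink c (fvec \<phi> i) (fvec \<phi> j) = mink c (axis i 1) (axis j 1)) \<and>
     (fvec \<phi> 4)$4 > 0"

definition inertial_cs :: "real \<Rightarrow> (real^4 \<Rightarrow> real^4) \<Rightarrow> bool" where
  "inertial_cs c \<phi> \<longleftrightarrow> affine_coord \<phi> \<and>
     (\<forall>v\<in>span {fvec \<phi> 1, fvec \<phi> 2, fvec \<phi> 3}. v \<noteq> 0 \<longrightarrow> mink c v v > 0) \<and>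
     mink c (fvec \<phi> 4) (fvec \<phi> 4) < 0"

text \<open>phi' is at rest w.r.t. phi: the time axes (worldlines of fixed spatial
  coordinates) are parallel.\<close>
definition at_rest_wrt :: "(real^4 \<Rightarrow> real^4) \<Rightarrow> (real^4 \<Rightarrow> real^4) \<Rightarrow> bool" where
  "at_rest_wrt \<phi>' \<phi> \<longleftrightarrow> (\<exists>a. fvec \<phi>' 4 = a *\<^sub>R fvec \<phi> 4)"

definition light_signal :: "real \<Rightarrow> real^4 \<Rightarrow> real^4 \<Rightarrow> bool" where
  "light_signal c p q \<longleftrightarrow> mink c (q - p) (q - p) = 0 \<and> (q - p)$4 > 0"

text \<open>Isotropy of the two-way velocity of light in phi: a light signal emitted from
  the spatial point at rest at coordinates X, reflected at the spatial point displaced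
  by d (d spatial, nonzero), and received back at the starting spatial point after
  coordinate time T, always has two-way velocity 2|d|/T equal to c, whatever the
  direction of d.\<close>
definition iso_two_way :: "real \<Rightarrow> (real^4 \<Rightarrow> real^4) \<Rightarrow> bool" where
  "iso_two_way c \<phi> \<longleftrightarrow>
     (\<forall>X d s T. d$4 = 0 \<and> d \<noteq> 0 \<and>
        light_signal c (inv \<phi> X) (inv \<phi> (X + d + s *\<^sub>R axis 4 1)) \<and>
        light_signal c (inv \<phi> (X + d + s *\<^sub>R axis 4 1)) (inv \<phi> (X + T *\<^sub>R axis 4 1))
        \<longrightarrow> 2 * norm d / T = c)"

definition causal_M :: "real \<Rightarrow> (real^4 \<Rightarrow> real^4) \<Rightarrow> real^4 \<Rightarrow> real^4 \<Rightarrow> bool" where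
  "causal_M c \<phi> p q \<longleftrightarrow> p \<noteq> q \<and>
     mink c (\<phi> q - \<phi> p) (\<phi> q - \<phi> p) \<le> 0 \<and> (\<phi> q - \<phi> p)$4 > 0"

end

theory Submission
  imports Defs
begin

text \<open>Let N be the linear part of the change from \<phi>'-coordinates to \<phi>-coordinates.  Being at
  rest means that N maps the time axis to itself, stretched by some factor \<alpha>.  Send light from a
  point at rest to a spatial displacement d and back, with both legs null in \<phi>: isotropy of the
  two-way speed of light in \<phi>' forces the spatial part of N d to have length \<alpha>|d|, and \<alpha> > 0.
  If N d had a positive time component, shifting d in time would produce a vector that is
  future null in \<phi> but spacelike in \<phi>', contradicting the inheritance of causality statements;
  applied to d and -d this shows that N preserves simultaneity.  Hence N multiplies the Minkowski
  form by \<alpha>^2, so \<alpha> \<phi>' is a Minkowski coordinate system whose synchrony is that of \<phi>.\<close>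

definition spatial_sq :: "real^4 \<Rightarrow> real" where
  "spatial_sq v = (v$1)\<^sup>2 + (v$2)\<^sup>2 + (v$3)\<^sup>2"

definition future_causal :: "real \<Rightarrow> real^4 \<Rightarrow> bool" where
  "future_causal c v \<longleftrightarrow> mink c v v \<le> 0 \<and> v$4 > 0"

definition future_null :: "real \<Rightarrow> real^4 \<Rightarrow> bool" where
  "future_null c v \<longleftrightarrow> mink c v v = 0 \<and> v$4 > 0"

lemma spatial_sq_nonneg: "spatial_sq v \<ge> 0"
  by (simp add: spatial_sq_def)

lemma spatial_sq_add_time [simp]: "spatial_sq (v + t *\<^sub>R axis 4 1) = spatial_sq v"
  by (simp add: spatial_sq_def axis_def)

lemma spatial_sq_time_diff [simp]: "spatial_sq (t *\<^sub>R axis 4 1 - v) = spatial_sq v"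
  by (simp add: spatial_sq_def axis_def power2_commute)

lemma spatial_sq_diff_time [simp]: "spatial_sq (v - t *\<^sub>R axis 4 1) = spatial_sq v"
  by (simp add: spatial_sq_def axis_def)

lemma norm_sq_spatial: "v$4 = 0 \<Longrightarrow> (norm v)\<^sup>2 = spatial_sq v"
  by (simp add: norm_vec_def L2_set_def sum_4 spatial_sq_def)

lemma mink_self: "mink c v v = spatial_sq v - c\<^sup>2 * (v$4)\<^sup>2"
  by (simp add: mink_def spatial_sq_def power2_eq_square)

lemma future_null_of_radius:
  assumes "c > 0" "r > 0" "spatial_sq v = r\<^sup>2" "v$4 = r / c"
  shows "future_null c v"
  using assms by (simp add: future_null_def mink_self power_divide)

lemma mink_add_left: "mink c (u + v) w = mink c u w + mink c v w"
  and mink_add_right: "mink c w (u + v) = mink c w u + mink c w v"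
  and mink_scaleR_left: "mink c (a *\<^sub>R u) w = a * mink c u w"
  and mink_scaleR_right: "mink c w (a *\<^sub>R u) = a * mink c w u"
  by (simp_all add: mink_def algebra_simps)

lemma bilinear_mink: "bilinear (mink c)"
  unfolding bilinear_def
  by (auto intro!: linearI simp: mink_add_left mink_add_right mink_scaleR_left mink_scaleR_right)

lemma mink_polar: "mink c u v = (mink c (u + v) (u + v) - mink c u u - mink c v v) / 2"
  by (simp add: mink_def algebra_simps)

lemma mink_linear_eqI:
  assumes "linear P"
    and "\<And>i j. mink c (P (axis i 1)) (P (axis j 1)) = mink c (axis i 1) (axis j 1)"
  shows "mink c (P x) (P y) = mink c x y"
proof -
  have "bilinear (\<lambda>x y. mink c (P x) (P y))"
    using bilinear_mink assms(1) unfolding bilinear_def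
    by (auto intro: linear_compose[unfolded o_def])
  then have "(\<lambda>x y. mink c (P x) (P y)) = mink c"
    by (rule bilinear_eq_stdbasis[OF _ bilinear_mink]) (auto dest!: axis_inverse simp: assms(2))
  then show ?thesis by metis
qed

lemma future_time_pos_of_mink_neg:
  assumes "mink c u u \<le> 0" and "future_causal c f" and "mink c u f < 0"
  shows "u$4 > 0"
proof (rule ccontr)
  assume "\<not> u$4 > 0"
  then have "c\<^sup>2 * u$4 * f$4 \<le> 0"
    using assms(2) mult_nonneg_nonpos[of "c\<^sup>2" "u$4 * f$4"]
    by (simp add: future_causal_def mult_nonpos_nonneg mult.assoc)
  define dot where "dot = u$1 * f$1 + u$2 * f$2 + u$3 * f$3"
  have "dot\<^sup>2 \<le> spatial_sq u * spatial_sq f"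
  proof -
    \<comment> \<open>Lagrange's identity\<close>
    have "0 \<le> (u$1 * f$2 - u$2 * f$1)\<^sup>2 + (u$1 * f$3 - u$3 * f$1)\<^sup>2 + (u$2 * f$3 - u$3 * f$2)\<^sup>2"
      by simp
    then show ?thesis by (simp add: dot_def spatial_sq_def power2_eq_square algebra_simps)
  qed
  also have "\<dots> \<le> (c\<^sup>2 * (u$4)\<^sup>2) * (c\<^sup>2 * (f$4)\<^sup>2)"
    using assms(1,2) by (intro mult_mono) (auto simp: mink_self future_causal_def spatial_sq_nonneg)
  also have "\<dots> = (c\<^sup>2 * u$4 * f$4)\<^sup>2"
    by (simp add: power2_eq_square)
  finally have "\<bar>dot\<bar> \<le> \<bar>c\<^sup>2 * u$4 * f$4\<bar>"
    using abs_le_square_iff by blast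
  moreover have "mink c u f = dot - c\<^sup>2 * u$4 * f$4"
    by (simp add: mink_def dot_def)
  ultimately show False
    using assms(3) \<open>c\<^sup>2 * u$4 * f$4 \<le> 0\<close> by linarith
qed

lemma isometry_preserves_future:
  assumes "c \<noteq> 0" and iso: "\<And>x y. mink c (P x) (P y) = mink c x y"
    and "(P (axis 4 1))$4 > 0" and w: "future_causal c w"
  shows "future_causal c (P w)"
proof -
  have "(P w)$4 > 0"
  proof (rule future_time_pos_of_mink_neg)
    show "mink c (P w) (P w) \<le> 0" using iso w by (simp add: future_causal_def)
    show "future_causal c (P (axis 4 1))"
      using assms by (simp add: future_causal_def iso mink_def axis_def)
    show "mink c (P w) (P (axis 4 1)) < 0"
      unfolding iso using assms(1) w by (simp add: mink_def axis_def future_causal_def)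
  qed
  then show ?thesis
    using w by (simp add: future_causal_def iso)
qed

lemma linear_inv_of_bij:
  fixes L :: "'a::euclidean_space \<Rightarrow> 'a"
  shows "linear L \<Longrightarrow> bij L \<Longrightarrow> linear (inv L)"
  using inj_linear_imp_inv_linear bij_is_inj by blast

lemma inv_affine:
  fixes L :: "'a \<Rightarrow> 'b::ab_group_add"
  assumes "bij L" "\<And>p. \<phi> p = L p + b"
  shows "inv \<phi> y = inv L (y - b)"
proof (rule inv_f_eq)
  show "inj \<phi>"
  proof (rule injI)
    fix x y
    assume "\<phi> x = \<phi> y"
    then have "L x = L y"
      by (simp add: assms(2))
    then show "x = y"
      using assms(1) by (simp add: bij_is_inj inj_eq)
  qed
  show "\<phi> (inv L (y - b)) = y"
    using assms by (simp add: bij_is_surj surj_f_inv_f)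
qed

lemma fvec_affine:
  assumes "linear L" "bij L" "\<And>p. \<phi> p = L p + b"
  shows "fvec \<phi> i = inv L (axis i 1)"
proof -
  have "linear (inv L)"
    using assms(1,2) by (rule linear_inv_of_bij)
  then show ?thesis
    unfolding fvec_def inv_affine[OF assms(2,3)] using assms(3)
    by (simp add: linear_0[OF assms(1)] linear_0)
qed

lemma affine_diff_transition:
  assumes "linear L" "\<And>p. \<phi> p = L p + b"
    and "linear L'" "bij L'" "\<And>p. \<phi>' p = L' p + b'"
  shows "\<phi> q - \<phi> p = L (inv L' (\<phi>' q - \<phi>' p))"
proof -
  have "\<phi>' q - \<phi>' p = L' (q - p)"
    using assms(3,5) by (simp add: linear_diff)
  then show ?thesis
    using assms(1,2,4) by (simp add: linear_diff bij_is_inj inv_f_f)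
qed

lemma minkowski_cs_linear_part:
  assumes "minkowski_cs c \<phi>"
  obtains L b where "linear L" "bij L" "\<And>p. \<phi> p = L p + b"
    and "\<And>x y. mink c (inv L x) (inv L y) = mink c x y"
    and "(inv L (axis 4 1))$4 > 0"
proof -
  obtain L b where L: "linear L" "bij L" "\<And>p. \<phi> p = L p + b"
    using assms unfolding minkowski_cs_def affine_coord_def by blast
  have "linear (inv L)"
    using L(1,2) by (rule linear_inv_of_bij)
  then have "mink c (inv L x) (inv L y) = mink c x y" for x y
    by (rule mink_linear_eqI) (use assms in \<open>simp add: minkowski_cs_def fvec_affine[OF L]\<close>)
  moreover have "(inv L (axis 4 1))$4 > 0"
    using assms by (simp add: minkowski_cs_def fvec_affine[OF L])
  ultimately show thesis
    using L that by blast
qed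

lemma inertial_cs_spacelike:
  assumes "inertial_cs c \<phi>" "linear L" "bij L" "\<And>p. \<phi> p = L p + b"
    and "d$4 = 0" "d \<noteq> 0"
  shows "mink c (inv L d) (inv L d) > 0"
proof -
  have lin: "linear (inv L)"
    using assms(2,3) by (rule linear_inv_of_bij)
  have "d = d$1 *\<^sub>R axis 1 1 + d$2 *\<^sub>R axis 2 1 + d$3 *\<^sub>R axis 3 1"
    using assms(5) by (simp add: vec_eq_iff forall_4 axis_def)
  then have "inv L d = inv L (d$1 *\<^sub>R axis 1 1 + d$2 *\<^sub>R axis 2 1 + d$3 *\<^sub>R axis 3 1)"
    by (rule arg_cong)
  also have "\<dots> = d$1 *\<^sub>R fvec \<phi> 1 + d$2 *\<^sub>R fvec \<phi> 2 + d$3 *\<^sub>R fvec \<phi> 3"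
    by (simp add: linear_add[OF lin] linear_scale[OF lin] fvec_affine[OF assms(2-4)])
  finally have "inv L d \<in> span {fvec \<phi> 1, fvec \<phi> 2, fvec \<phi> 3}"
    by (simp add: span_add span_scale span_base)
  moreover have "inv L d \<noteq> 0"
  proof
    assume "inv L d = 0"
    then have "L (inv L d) = 0"
      by (simp add: linear_0[OF assms(2)])
    then show False
      using assms(3,6) by (simp add: bij_is_surj surj_f_inv_f)
  qed
  ultimately show ?thesis
    using assms(1) unfolding inertial_cs_def by blast
qed

lemma causal_M_iff: "causal_M c \<phi> p q \<longleftrightarrow> p \<noteq> q \<and> future_causal c (\<phi> q - \<phi> p)"
  by (simp add: causal_M_def future_causal_def)

lemma light_signal_affine:
  fixes L :: "real^4 \<Rightarrow> real^4"
  assumes "linear L" "bij L" "\<And>p. \<phi> p = L p + b"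
  shows "light_signal c (inv \<phi> X) (inv \<phi> Y) \<longleftrightarrow> future_null c (inv L (Y - X))"
proof -
  have "linear (inv L)"
    using assms(1,2) by (rule linear_inv_of_bij)
  then have "inv \<phi> Y - inv \<phi> X = inv L (Y - X)"
    unfolding inv_affine[OF assms(2,3)] by (simp add: linear_diff[symmetric])
  then show ?thesis
    by (simp add: light_signal_def future_null_def)
qed

locale rest_transition =
  fixes c \<alpha> :: real and N :: "real^4 \<Rightarrow> real^4"
  assumes c_pos: "c > 0"
    and linear_N: "linear N"
    and inj_N: "inj N"
    and N_time_axis: "N (axis 4 1) = \<alpha> *\<^sub>R axis 4 1"
    and spacelike: "\<And>d. d$4 = 0 \<Longrightarrow> d \<noteq> 0 \<Longrightarrow> mink c (N d) (N d) > 0"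
    and two_way_light_speed: "\<And>d s T. d$4 = 0 \<Longrightarrow> d \<noteq> 0 \<Longrightarrow>
      future_null c (N (d + s *\<^sub>R axis 4 1)) \<Longrightarrow>
      future_null c (N (T *\<^sub>R axis 4 1 - (d + s *\<^sub>R axis 4 1))) \<Longrightarrow> 2 * norm d / T = c"
    and causal_reflecting: "\<And>y. future_causal c (N y) \<Longrightarrow> future_causal c y"
begin

lemma alpha_nonzero: "\<alpha> \<noteq> 0"
  using inj_N N_time_axis linear_0[OF linear_N] by (metis axis_eq_0_iff injD scale_zero_left zero_neq_one)

lemma N_add_time: "N (v + t *\<^sub>R axis 4 1) = N v + (\<alpha> * t) *\<^sub>R axis 4 1"
  by (simp add: linear_add[OF linear_N] linear_scale[OF linear_N] N_time_axis)

lemma N_time_diff: "N (t *\<^sub>R axis 4 1 - v) = (\<alpha> * t) *\<^sub>R axis 4 1 - N v"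
  by (simp add: linear_diff[OF linear_N] linear_scale[OF linear_N] N_time_axis)

lemma spatial_sq_N_pos: "d$4 = 0 \<Longrightarrow> d \<noteq> 0 \<Longrightarrow> spatial_sq (N d) > 0"
  using spacelike[of d] unfolding mink_self
  by (metis diff_gt_0_iff_gt le_less_trans mult_nonneg_nonneg zero_le_power2)

lemma two_way_scale:
  assumes d: "d$4 = 0" "d \<noteq> 0"
  shows "\<alpha> * norm d = sqrt (spatial_sq (N d))"
proof -
  define r where "r = sqrt (spatial_sq (N d))"
  have "spatial_sq (N d) > 0"
    by (rule spatial_sq_N_pos[OF d])
  then have r: "r > 0" "spatial_sq (N d) = r\<^sup>2"
    by (simp_all add: r_def)
  \<comment> \<open>both legs then last time r/c in \<phi>-coordinates, the light-travel time over distance r\<close>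
  define s where "s = (r / c - (N d)$4) / \<alpha>"
  define T where "T = 2 * r / (c * \<alpha>)"
  have "future_null c (N (d + s *\<^sub>R axis 4 1))"
    using r alpha_nonzero
    by (intro future_null_of_radius[OF c_pos, of r]) (simp_all add: N_add_time s_def)
  moreover have "future_null c (N (T *\<^sub>R axis 4 1 - (d + s *\<^sub>R axis 4 1)))"
  proof -
    have return_leg: "T *\<^sub>R axis 4 1 - (d + s *\<^sub>R axis 4 1) = (T - s) *\<^sub>R axis 4 1 - d"
      by (simp add: algebra_simps)
    have "\<alpha> * (T - s) - (N d)$4 = r / c"
      using alpha_nonzero c_pos by (simp add: T_def s_def field_simps)
    then show ?thesis
      unfolding return_leg using r by (intro future_null_of_radius[OF c_pos, of r]) (simp_all add: N_time_diff)
  qed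
  ultimately have "2 * norm d / T = c"
    using two_way_light_speed[OF d] by blast
  moreover have "T \<noteq> 0"
    using r c_pos alpha_nonzero by (simp add: T_def)
  ultimately have "norm d = c * T / 2"
    by (simp add: divide_eq_eq)
  then show ?thesis
    using c_pos alpha_nonzero by (simp add: T_def r_def)
qed

lemma alpha_pos: "\<alpha> > 0"
proof -
  have "\<alpha> * norm (axis 1 1 :: real^4) = sqrt (spatial_sq (N (axis 1 1)))"
    by (rule two_way_scale) (simp add: axis_def, simp)
  moreover have "spatial_sq (N (axis 1 1)) > 0"
    by (rule spatial_sq_N_pos) (simp add: axis_def, simp)
  ultimately show ?thesis by simp
qed

lemma spatial_sq_N_spatial:
  assumes "d$4 = 0"
  shows "spatial_sq (N d) = \<alpha>\<^sup>2 * spatial_sq d"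
proof (cases "d = 0")
  case True
  then show ?thesis by (simp add: linear_0[OF linear_N] spatial_sq_def)
next
  case False
  have "spatial_sq (N d) = (\<alpha> * norm d)\<^sup>2"
    using two_way_scale[OF assms False] spatial_sq_nonneg by simp
  then show ?thesis
    using norm_sq_spatial[OF assms] by (simp add: power_mult_distrib)
qed

lemma N_spatial_time_nonpos:
  assumes d: "d$4 = 0"
  shows "(N d)$4 \<le> 0"
proof (rule ccontr)
  assume "\<not> (N d)$4 \<le> 0"
  then have \<beta>: "(N d)$4 > 0" by simp
  then have "d \<noteq> 0"
    using linear_0[OF linear_N] by auto
  define n where "n = norm d"
  have n: "n > 0" "spatial_sq d = n\<^sup>2"
    using \<open>d \<noteq> 0\<close> norm_sq_spatial[OF d] by (simp_all add: n_def)
  define t where "t = n / c - (N d)$4 / \<alpha>"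
  have "future_null c (N (d + t *\<^sub>R axis 4 1))"
    using alpha_pos c_pos n
    by (intro future_null_of_radius[OF c_pos, of "\<alpha> * n"])
      (simp_all add: N_add_time spatial_sq_N_spatial[OF d] t_def field_simps)
  then have "future_causal c (N (d + t *\<^sub>R axis 4 1))"
    by (simp add: future_null_def future_causal_def)
  then have "future_causal c (d + t *\<^sub>R axis 4 1)"
    by (rule causal_reflecting)
  then have "n\<^sup>2 \<le> (c * t)\<^sup>2" "t > 0"
    using d n by (simp_all add: future_causal_def mink_self power_mult_distrib)
  then have "n \<le> c * t"
    using c_pos power2_le_imp_le[of n "c * t"] by simp
  moreover have "c * t = n - c * (N d)$4 / \<alpha>"
    using c_pos by (simp add: t_def right_diff_distrib)
  moreover have "c * (N d)$4 / \<alpha> > 0"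
    using \<beta> alpha_pos c_pos by simp
  ultimately show False by simp
qed

lemma N_spatial_time: "d$4 = 0 \<Longrightarrow> (N d)$4 = 0"
  using N_spatial_time_nonpos[of d] N_spatial_time_nonpos[of "- d"]
  by (simp add: linear_neg[OF linear_N])

lemma N_time: "(N x)$4 = \<alpha> * x$4"
proof -
  have "N x = N (x - x$4 *\<^sub>R axis 4 1) + (\<alpha> * x$4) *\<^sub>R axis 4 1"
    using N_add_time[of "x - x$4 *\<^sub>R axis 4 1" "x$4"] by simp
  then show ?thesis
    by (simp add: N_spatial_time)
qed

lemma mink_N_self: "mink c (N x) (N x) = \<alpha>\<^sup>2 * mink c x x"
proof -
  have "spatial_sq (N x) = spatial_sq (N (x - x$4 *\<^sub>R axis 4 1))"
    using N_add_time[of "x - x$4 *\<^sub>R axis 4 1" "x$4"] by simp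
  also have "\<dots> = \<alpha>\<^sup>2 * spatial_sq x"
    by (simp add: spatial_sq_N_spatial)
  finally show ?thesis
    by (simp add: mink_self N_time algebra_simps)
qed

lemma mink_N: "mink c (N x) (N y) = \<alpha>\<^sup>2 * mink c x y"
proof -
  have "mink c (N x) (N y) = (mink c (N (x + y)) (N (x + y)) - mink c (N x) (N x) - mink c (N y) (N y)) / 2"
    by (subst mink_polar) (simp add: linear_add[OF linear_N])
  also have "\<dots> = \<alpha>\<^sup>2 * ((mink c (x + y) (x + y) - mink c x x - mink c y y) / 2)"
    by (simp add: mink_N_self algebra_simps)
  finally show ?thesis
    by (simp only: mink_polar[symmetric])
qed

end

lemma causal_reflection_of_frames:
  assumes L: "linear L" "\<And>p. \<phi> p = L p + b"
    and L': "linear L'" "bij L'" "\<And>p. \<phi>' p = L' p + b'"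
    and causal: "\<forall>p q. causal_M c \<phi> p q \<longrightarrow> causal_M c \<phi>' p q"
    and future: "future_causal c (L (inv L' y))"
  shows "future_causal c y"
proof -
  define p q where "p = inv \<phi>' 0" and "q = inv \<phi>' y"
  have "\<phi>' (inv \<phi>' x) = x" for x
    using L'(2) by (simp add: inv_affine[OF L'(2,3)] L'(3) bij_is_surj surj_f_inv_f)
  then have primed: "\<phi>' q - \<phi>' p = y"
    by (simp add: p_def q_def)
  then have "\<phi> q - \<phi> p = L (inv L' y)"
    using affine_diff_transition[OF L L'] by simp
  moreover have "p \<noteq> q"
    using future primed linear_0[OF L(1)] linear_0[OF linear_inv_of_bij[OF L'(1,2)]]
    by (auto simp: future_causal_def)
  ultimately have "causal_M c \<phi> p q"
    using future by (simp add: causal_M_iff)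
  then have "causal_M c \<phi>' p q"
    using causal by blast
  then show ?thesis
    by (simp add: causal_M_iff primed)
qed

lemma rest_transition_of_frames:
  assumes c: "c > 0"
    and L: "linear L" "bij L" "\<And>p. \<phi> p = L p + b"
    and isometry: "\<And>x y. mink c (inv L x) (inv L y) = mink c x y"
    and oriented: "(inv L (axis 4 1))$4 > 0"
    and L': "linear L'" "bij L'" "\<And>p. \<phi>' p = L' p + b'"
    and inertial: "inertial_cs c \<phi>'"
    and rest: "at_rest_wrt \<phi>' \<phi>"
    and isotropic: "iso_two_way c \<phi>'"
    and causal: "\<forall>p q. causal_M c \<phi> p q \<longrightarrow> causal_M c \<phi>' p q"
  obtains \<alpha> where "rest_transition c \<alpha> (\<lambda>x. L (inv L' x))"
proof -
  let ?N = "\<lambda>x. L (inv L' x)"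
  have inv_L_N: "inv L (?N x) = inv L' x" for x
    using L(2) by (simp add: bij_is_inj inv_f_f)
  have null_preserved: "future_null c (inv L v)" if "future_null c v" for v
  proof -
    have "future_causal c (inv L v)"
      using c that by (intro isometry_preserves_future[OF _ isometry oriented])
        (simp_all add: future_null_def future_causal_def)
    then show ?thesis
      using that by (simp add: future_null_def future_causal_def isometry)
  qed
  from rest obtain \<alpha> where "inv L' (axis 4 1) = \<alpha> *\<^sub>R inv L (axis 4 1)"
    unfolding at_rest_wrt_def fvec_affine[OF L] fvec_affine[OF L'] by blast
  then have time_axis: "?N (axis 4 1) = \<alpha> *\<^sub>R axis 4 1"
    using L(2) by (simp add: linear_scale[OF L(1)] bij_is_surj surj_f_inv_f)
  show thesis
  proof (rule that, rule rest_transition.intro)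
    show "c > 0" by fact
    show "linear ?N"
      using linear_compose[OF linear_inv_of_bij[OF L'(1,2)] L(1)] by (simp add: o_def)
    show "inj ?N"
      using inj_compose[OF bij_is_inj[OF L(2)] bij_is_inj[OF bij_imp_bij_inv[OF L'(2)]]]
      by (simp add: o_def)
    show "?N (axis 4 1) = \<alpha> *\<^sub>R axis 4 1" by (fact time_axis)
    show "mink c (?N d) (?N d) > 0" if "d$4 = 0" "d \<noteq> 0" for d
      using inertial_cs_spacelike[OF inertial L' that] isometry[of "?N d" "?N d"] by (simp add: inv_L_N)
    show "2 * norm d / T = c"
      if d: "d$4 = 0" "d \<noteq> 0"
        and null: "future_null c (?N (d + s *\<^sub>R axis 4 1))"
          "future_null c (?N (T *\<^sub>R axis 4 1 - (d + s *\<^sub>R axis 4 1)))"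
      for d s T
    proof -
      have "light_signal c (inv \<phi>' 0) (inv \<phi>' (0 + d + s *\<^sub>R axis 4 1))"
        using null_preserved[OF null(1)] by (simp add: light_signal_affine[OF L'] inv_L_N)
      moreover have "light_signal c (inv \<phi>' (0 + d + s *\<^sub>R axis 4 1)) (inv \<phi>' (0 + T *\<^sub>R axis 4 1))"
        using null_preserved[OF null(2)] by (simp add: light_signal_affine[OF L'] inv_L_N)
      ultimately show ?thesis
        using isotropic d unfolding iso_two_way_def by blast
    qed
    show "future_causal c y" if "future_causal c (?N y)" for y
      using causal_reflection_of_frames[OF L(1,3) L' causal that] .
  qed
qed

lemma minkowski_cs_rescaled:
  assumes L: "linear L" "bij L"
    and isometry: "\<And>x y. mink c (inv L x) (inv L y) = mink c x y"
    and oriented: "(inv L (axis 4 1))$4 > 0"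
    and L': "linear L'" "bij L'" "\<And>p. \<phi>' p = L' p + b'"
    and a: "a > 0"
    and conformal: "\<And>x y. mink c (L (inv L' x)) (L (inv L' y)) = a\<^sup>2 * mink c x y"
    and time_axis: "L (inv L' (axis 4 1)) = a *\<^sub>R axis 4 1"
  shows "minkowski_cs c (\<lambda>p. a *\<^sub>R \<phi>' p)"
proof -
  define M where "M x = a *\<^sub>R L' x" for x
  define M' where "M' y = (1 / a) *\<^sub>R inv L' y" for y
  have "M (M' y) = y" for y
    using a L'(2) by (simp add: M_def M'_def linear_scale[OF L'(1)] bij_is_surj surj_f_inv_f)
  moreover have "M' (M x) = x" for x
    using a L'(2) by (simp add: M_def M'_def linear_scale[OF L'(1), symmetric] bij_is_inj inv_f_f)
  ultimately have M_M': "M \<circ> M' = id" "M' \<circ> M = id"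
    by (simp_all add: fun_eq_iff)
  have "linear M"
    unfolding M_def using linear_compose[OF L'(1) linear_scaleR[of a]] by (simp add: o_def)
  then have M: "linear M" "bij M" "\<And>p. a *\<^sub>R \<phi>' p = M p + a *\<^sub>R b'"
    using M_M' L'(3) by (auto simp: M_def o_bij scaleR_add_right)
  have "inv M = M'"
    using M_M' by (simp add: inv_unique_comp)
  then have fvec: "fvec (\<lambda>p. a *\<^sub>R \<phi>' p) i = (1 / a) *\<^sub>R inv L (L (inv L' (axis i 1)))" for i
    using L(2) by (simp add: fvec_affine[OF M] M'_def bij_is_inj inv_f_f)
  have "affine_coord (\<lambda>p. a *\<^sub>R \<phi>' p)"
    using M unfolding affine_coord_def by blast
  moreover have "mink c (fvec (\<lambda>p. a *\<^sub>R \<phi>' p) i) (fvec (\<lambda>p. a *\<^sub>R \<phi>' p) j) = mink c (axis i 1) (axis j 1)"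
    for i j
    using a by (simp add: fvec mink_scaleR_left mink_scaleR_right isometry conformal power2_eq_square)
  moreover have "(fvec (\<lambda>p. a *\<^sub>R \<phi>' p) 4)$4 > 0"
    using a oriented by (simp add: fvec time_axis linear_scale[OF linear_inv_of_bij[OF L]])
  ultimately show ?thesis
    unfolding minkowski_cs_def by blast
qed

theorem theorem3p15:
  fixes c :: real and \<phi> \<phi>' :: "real^4 \<Rightarrow> real^4"
  assumes "c > 0"
    and "minkowski_cs c \<phi>"
    and "inertial_cs c \<phi>'"
    and "at_rest_wrt \<phi>' \<phi>"
    and "iso_two_way c \<phi>'"
    and "\<forall>p q. causal_M c \<phi> p q \<longrightarrow> causal_M c \<phi>' p q"
  shows "(\<exists>a>0. minkowski_cs c (\<lambda>p. a *\<^sub>R \<phi>' p)) \<and>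
         (\<forall>p q. (\<phi> p)$4 = (\<phi> q)$4 \<longleftrightarrow> (\<phi>' p)$4 = (\<phi>' q)$4)"
proof -
  obtain L b where L: "linear L" "bij L" "\<And>p. \<phi> p = L p + b"
    and isometry: "\<And>x y. mink c (inv L x) (inv L y) = mink c x y"
    and oriented: "(inv L (axis 4 1))$4 > 0"
    using minkowski_cs_linear_part[OF assms(2)] by blast
  obtain L' b' where L': "linear L'" "bij L'" "\<And>p. \<phi>' p = L' p + b'"
    using assms(3) unfolding inertial_cs_def affine_coord_def by blast
  obtain \<alpha> where "rest_transition c \<alpha> (\<lambda>x. L (inv L' x))"
    using rest_transition_of_frames[OF assms(1) L isometry oriented L' assms(3-6)] by blast
  then interpret rest_transition c \<alpha> "\<lambda>x. L (inv L' x)" .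
  have "minkowski_cs c (\<lambda>p. \<alpha> *\<^sub>R \<phi>' p)"
    by (rule minkowski_cs_rescaled[OF L(1,2) isometry oriented L' alpha_pos mink_N N_time_axis])
  moreover have "(\<phi> p)$4 = (\<phi> q)$4 \<longleftrightarrow> (\<phi>' p)$4 = (\<phi>' q)$4" for p q
  proof -
    have "(\<phi> q - \<phi> p)$4 = \<alpha> * (\<phi>' q - \<phi>' p)$4"
      unfolding affine_diff_transition[OF L(1,3) L'] by (rule N_time)
    then have "(\<phi> q - \<phi> p)$4 = 0 \<longleftrightarrow> (\<phi>' q - \<phi>' p)$4 = 0"
      using alpha_pos by simp
    then show ?thesis
      by auto
  qed
  ultimately show ?thesis
    using alpha_pos by blast
qed

end
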